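(* Fix an integer $N\ge 1$. For real $\mu$, let $\ell^2_\mu\subset\mathbb{C}^\infty$ be the space of sequences with norm $\|\mathbf u\|_{\ell^2_\mu}=\bigl(\sum_{k\ge0}|u_k|^2(k+1)^{2\mu}\bigr)^{1/2}$, and equip $\mathbb{C}^n$ (viewed as the first $n$ entries of a sequence) with the induced norm, also denoted $\ell^2_\mu$. Let $\mathcal L$, $\mathcal B$, $D$ and $\mathcal R$ be as in the context (in particular $\mathcal B:\ell^2_D\to\mathbb{C}^N$ is bounded). Suppose that $\begin{pmatrix}\mathcal B\\ \mathcal L\end{pmatrix}:\ell^2_{\lambda+1}\to\ell^2_\lambda$ is an invertible operator for some $\lambda\in\{D-1,D,D+1,\dots\}$. Let $\mathcal P_n=(I_n,\mathbf 0)$ be the $n\times\infty$ projection onto the first $n$ entries, $R_n=\mathcal P_n\mathcal R\mathcal P_n^\top$ and $A_n=\mathcal P_n\begin{pmatrix}\mathcal B\\ \mathcal L\end{pmatrix}\mathcal P_n^\top$. Then, as $n\to\infty$, $$\|A_nR_n\|_{\ell^2_\lambda}=O(1)\quad\text{and}\quad\|(A_nR_n)^{-1}\|_{\ell^2_\lambda}=O(1).$$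
   Context: Chebyshev polynomials are $T_k(x)=\cos(k\arccos x)$. For integers $\lambda\ge1$, $C^{(\lambda)}_k$ are the ultraspherical polynomials, orthogonal on $[-1,1]$ with weight $(1-x^2)^{\lambda-1/2}$ and normalized so that $C^{(\lambda)}_k(x)=\frac{2^k(\lambda)_k}{k!}x^k+O(x^{k-1})$, $(\lambda)_k=\frac{(\lambda+k-1)!}{(\lambda-1)!}$. Operators act on coefficient sequences indexed from $0$. $(\mathcal D_\lambda\mathbf u)_j=2^{\lambda-1}(\lambda-1)!\,(j+\lambda)u_{j+\lambda}$ (maps Chebyshev coefficients of $u$ to $C^{(\lambda)}$ coefficients of $u^{(\lambda)}$). $(\mathcal S_0\mathbf u)_0=u_0-\tfrac12u_2$, $(\mathcal S_0\mathbf u)_j=\tfrac12(u_j-u_{j+2})$ for $j\ge1$ (Chebyshev to $C^{(1)}$ coefficients); for $\lambda\ge1$, $(\mathcal S_\lambda\mathbf v)_j=\frac{\lambda}{\lambda+j}v_j-\frac{\lambda}{\lambda+j+2}v_{j+2}$ ($C^{(\lambda)}$ to $C^{(\lambda+1)}$ coefficients). $\mathcal M_0[a]$ maps Chebyshev coefficients of $v$ to Chebyshev coefficients of $av$, and for $\lambda\ge1$, $\mathcal M_\lambda[a]$ maps $C^{(\lambda)}$ coefficients of $v$ to $C^{(\lambda)}$ coefficients of $av$. The differential operator (with leading coefficient $1$) is represented on Chebyshev coefficients by $\mathcal L=\mathcal D_N+\sum_{\lambda=1}^{N-1}\mathcal S_{N-1}\cdots\mathcal S_\lambda\mathcal M_\lambda[a^\lambda]\mathcal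 D_\lambda+\mathcal S_{N-1}\cdots\mathcal S_0\mathcal M_0[a^0]$, where the coefficient functions $a^0,\dots,a^{N-1}$ are sufficiently smooth that each $\mathcal M_\lambda[a^\lambda]$ is bounded on every $\ell^2_\mu$. $\mathcal B$ is a linear operator from sequences to $\mathbb{C}^N$ representing exactly $N$ boundary conditions on the Chebyshev coefficients, and $D$ is an integer such that $\mathcal B:\ell^2_D\to\mathbb{C}^N$ is bounded. $\mathcal R=\frac{1}{2^{N-1}(N-1)!}\mathrm{diag}(1,\dots,1,\tfrac1N,\tfrac1{N+1},\dots)$ with $N$ leading ones. $\begin{pmatrix}\mathcal B\\ \mathcal L\end{pmatrix}$ outputs the $N$ entries of $\mathcal B\mathbf u$ followed by $\mathcal L\mathbf u$. *)

theory Defs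
  imports "HOL-Analysis.Analysis"
begin

type_synonym cseq = "nat \<Rightarrow> complex"

definition l2w :: "real \<Rightarrow> cseq set" where
  "l2w \<mu> = {u. summable (\<lambda>k. (cmod (u k))^2 * (real k + 1) powr (2 * \<mu>))}"

definition l2norm :: "real \<Rightarrow> cseq \<Rightarrow> real" where
  "l2norm \<mu> u = sqrt (\<Sum>k. (cmod (u k))^2 * (real k + 1) powr (2 * \<mu>))"

text \<open>Chebyshev polynomials and ultraspherical (Gegenbauer) polynomials (explicit formula,
  normalised with leading coefficient 2^k (lam)_k / k!).\<close>
definition cheb :: "nat \<Rightarrow> real \<Rightarrow> real" where
  "cheb k x = cos (real k * arccos x)"

definition gegen :: "nat \<Rightarrow> nat \<Rightarrow> real \<Rightarrow> real" where
  "gegen lam k x = (\<Sum>m\<le>k div 2. (-1)^m * pochhammer (real lam) (k - m)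
        / (fact m * fact (k - 2*m)) * (2*x)^(k - 2*m))"

definition obasis :: "nat \<Rightarrow> nat \<Rightarrow> real \<Rightarrow> real" where
  "obasis lam k x = (if lam = 0 then cheb k x else gegen lam k x)"

definition oweight :: "nat \<Rightarrow> real \<Rightarrow> real" where
  "oweight lam x = (1 - x^2) powr (real lam - 1/2)"

definition ocoeff :: "nat \<Rightarrow> (real \<Rightarrow> complex) \<Rightarrow> nat \<Rightarrow> complex" where
  "ocoeff lam f j =
     integral {-1..1} (\<lambda>x. f x * complex_of_real (obasis lam j x * oweight lam x))
     / complex_of_real (integral {-1..1} (\<lambda>x. (obasis lam j x)^2 * oweight lam x))"

definition Mmat :: "nat \<Rightarrow> (real \<Rightarrow> complex) \<Rightarrow> nat \<Rightarrow> nat \<Rightarrow> complex" where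
  "Mmat lam a j k = ocoeff lam (\<lambda>x. a x * complex_of_real (obasis lam k x)) j"

definition Mop :: "nat \<Rightarrow> (real \<Rightarrow> complex) \<Rightarrow> cseq \<Rightarrow> cseq" where
  "Mop lam a v = (\<lambda>j. \<Sum>k. Mmat lam a j k * v k)"

definition Dop :: "nat \<Rightarrow> cseq \<Rightarrow> cseq" where
  "Dop lam u = (\<lambda>j. complex_of_real (2^(lam - 1) * fact (lam - 1) * real (j + lam)) * u (j + lam))"

definition Sop :: "nat \<Rightarrow> cseq \<Rightarrow> cseq" where
  "Sop lam v = (\<lambda>j.
     if lam = 0 then (if j = 0 then v 0 - v 2 / 2 else (v j - v (j + 2)) / 2)
     else complex_of_real (real lam / real (lam + j)) * v j
        - complex_of_real (real lam / real (lam + j + 2)) * v (j + 2))"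

fun Schain :: "nat \<Rightarrow> nat \<Rightarrow> cseq \<Rightarrow> cseq" where
  "Schain lam 0 v = v"
| "Schain lam (Suc m) v = Sop (lam + m) (Schain lam m v)"

definition Lop :: "nat \<Rightarrow> (nat \<Rightarrow> real \<Rightarrow> complex) \<Rightarrow> cseq \<Rightarrow> cseq" where
  "Lop N a u = (\<lambda>j. Dop N u j
      + (\<Sum>lam = 1..N - 1. Schain lam (N - lam) (Mop lam (a lam) (Dop lam u)) j)
      + Schain 0 N (Mop 0 (a 0) u) j)"

definition BLop :: "nat \<Rightarrow> (nat \<Rightarrow> cseq \<Rightarrow> complex) \<Rightarrow> (nat \<Rightarrow> real \<Rightarrow> complex) \<Rightarrow> cseq \<Rightarrow> cseq" where
  "BLop N B a u = (\<lambda>j. if j < N then B j u else Lop N a u (j - N))"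

definition Rop :: "nat \<Rightarrow> cseq \<Rightarrow> cseq" where
  "Rop N u = (\<lambda>k. complex_of_real (1 / (2^(N - 1) * fact (N - 1))
                   * (if k < N then 1 else 1 / real k)) * u k)"

text \<open>C^n is identified with sequences vanishing from index n on; P_n^T P_n = trunc n.\<close>
definition trunc :: "nat \<Rightarrow> cseq \<Rightarrow> cseq" where
  "trunc n u = (\<lambda>k. if k < n then u k else 0)"

definition fin_space :: "nat \<Rightarrow> cseq set" where
  "fin_space n = {x. \<forall>k\<ge>n. x k = 0}"

definition An :: "nat \<Rightarrow> (nat \<Rightarrow> cseq \<Rightarrow> complex) \<Rightarrow> (nat \<Rightarrow> real \<Rightarrow> complex) \<Rightarrow> nat \<Rightarrow> cseq \<Rightarrow> cseq" where
  "An N B a n x = trunc n (BLop N B a (trunc n x))"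

definition Rn :: "nat \<Rightarrow> nat \<Rightarrow> cseq \<Rightarrow> cseq" where
  "Rn N n x = trunc n (Rop N (trunc n x))"

definition fin_opnorm :: "real \<Rightarrow> nat \<Rightarrow> (cseq \<Rightarrow> cseq) \<Rightarrow> real" where
  "fin_opnorm \<mu> n T = (SUP x \<in> {x \<in> fin_space n. x \<noteq> (\<lambda>_. 0)}. l2norm \<mu> (T x) / l2norm \<mu> x)"

end

theory Submission
  imports Defs "HOL-Library.Function_Algebras"
begin

text \<open>
  Beyond index \<open>N\<close> the leading term \<open>Dop N\<close> is undone by \<open>Rop N\<close>, so from index \<open>N\<close> on
  \<open>BLop N B a (Rop N x)\<close> is \<open>x\<close> plus \<open>Llow N a (Rop N x)\<close> shifted by \<open>N\<close>, and the lower-order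
  part \<open>x \<mapsto> Llow N a (Rop N x)\<close> maps \<open>l2_\<mu>\<close> boundedly into \<open>l2_(\<mu>+1)\<close>.  For \<open>x\<close> supported
  in the first \<open>n\<close> entries, \<open>A_n R_n x\<close> is the truncation of \<open>BLop N B a (Rop N x)\<close> to those
  entries, and the discarded tail is a tail of that lower-order part; the gain of one weight makes
  its squared \<open>l2_\<lambda>\<close> norm \<open>O(n^-2)\<close> times that of \<open>x\<close>.  The bounded inverse of \<open>BLop N B a\<close>
  and the lower bound on \<open>Rop N\<close> give \<open>|x| \<le> C |BLop N B a (Rop N x)|\<close>, so for large \<open>n\<close> also
  \<open>|x| \<le> 2C |A_n R_n x|\<close>.  Hence \<open>A_n R_n\<close> is injective, so bijective on the finite-dimensional
  space, with a uniformly bounded inverse; the bound on \<open>A_n R_n\<close> itself comes from boundedness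
  of \<open>BLop N B a\<close> and \<open>Rop N\<close>.
\<close>

section \<open>Weighted square sums\<close>

definition l2sq :: "real \<Rightarrow> cseq \<Rightarrow> real" where
  "l2sq \<mu> u = (\<Sum>k. (cmod (u k))^2 * (real k + 1) powr (2 * \<mu>))"

lemma l2norm_eq_sqrt_l2sq: "l2norm \<mu> u = sqrt (l2sq \<mu> u)"
  unfolding l2norm_def l2sq_def ..

lemma summable_l2w: "u \<in> l2w \<mu> \<Longrightarrow> summable (\<lambda>k. (cmod (u k))^2 * (real k + 1) powr (2 * \<mu>))"
  unfolding l2w_def by simp

lemma l2sq_nonneg: "u \<in> l2w \<mu> \<Longrightarrow> 0 \<le> l2sq \<mu> u"
  unfolding l2sq_def l2w_def by (auto intro!: suminf_nonneg)

lemma l2sq_zero: "l2sq \<mu> (\<lambda>_. 0) = 0"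
  by (simp add: l2sq_def)

lemma l2sq_pos:
  assumes u: "u \<in> l2w \<mu>" and nz: "u \<noteq> (\<lambda>_. 0)"
  shows "0 < l2sq \<mu> u"
proof -
  obtain k where "u k \<noteq> 0" using nz by auto
  then have "l2sq \<mu> u \<noteq> 0"
    unfolding l2sq_def using suminf_eq_zero_iff[OF summable_l2w[OF u]] by auto
  with l2sq_nonneg[OF u] show ?thesis by linarith
qed

lemma l2sq_le_of_sqrt_le:
  assumes "u \<in> l2w \<mu>" "v \<in> l2w \<nu>" "sqrt (l2sq \<mu> u) \<le> C * sqrt (l2sq \<nu> v)"
  shows "l2sq \<mu> u \<le> C^2 * l2sq \<nu> v"
proof -
  have "(sqrt (l2sq \<mu> u))^2 \<le> (C * sqrt (l2sq \<nu> v))^2"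
    using assms l2sq_nonneg[OF assms(1)] by (intro power_mono) auto
  then show ?thesis using l2sq_nonneg[OF assms(1)] l2sq_nonneg[OF assms(2)]
    by (simp add: power_mult_distrib)
qed

lemma l2w_weight_mono:
  assumes "\<nu>' \<le> \<nu>" "v \<in> l2w \<nu>"
  shows "v \<in> l2w \<nu>' \<and> l2sq \<nu>' v \<le> l2sq \<nu> v"
proof -
  have le: "(cmod (v k))^2 * (real k + 1) powr (2 * \<nu>') \<le> (cmod (v k))^2 * (real k + 1) powr (2 * \<nu>)" for k
    using assms by (intro mult_left_mono powr_mono) auto
  have s': "summable (\<lambda>k. (cmod (v k))^2 * (real k + 1) powr (2 * \<nu>'))"
    by (rule summable_comparison_test[OF _ summable_l2w[OF assms(2)]]) (use le in auto)
  show ?thesis unfolding l2w_def l2sq_def using summable_l2w[OF assms(2)] s' le by (auto intro: suminf_le)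
qed

definition tail_l2sq :: "real \<Rightarrow> nat \<Rightarrow> cseq \<Rightarrow> real" where
  "tail_l2sq \<mu> n u = (\<Sum>k. if k < n then 0 else (cmod (u k))^2 * (real k + 1) powr (2 * \<mu>))"

lemma l2sq_eq_trunc_plus_tail:
  assumes "u \<in> l2w \<mu>"
  shows "l2sq \<mu> u = l2sq \<mu> (trunc n u) + tail_l2sq \<mu> n u"
proof -
  let ?f = "\<lambda>k. (cmod (u k))^2 * (real k + 1) powr (2 * \<mu>)"
  have s1: "summable (\<lambda>k. if k < n then ?f k else 0)"
    by (rule summable_finite[of "{..<n}"]) auto
  have s2: "summable (\<lambda>k. if k < n then 0 else ?f k)"
    by (rule summable_comparison_test[OF _ summable_l2w[OF assms]]) auto
  have "l2sq \<mu> u = (\<Sum>k. (if k < n then ?f k else 0) + (if k < n then 0 else ?f k))"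
    unfolding l2sq_def by (rule suminf_cong) simp
  also have "\<dots> = (\<Sum>k. if k < n then ?f k else 0) + (\<Sum>k. if k < n then 0 else ?f k)"
    by (rule suminf_add[OF s1 s2, symmetric])
  also have "(\<Sum>k. if k < n then ?f k else 0) = l2sq \<mu> (trunc n u)"
    unfolding l2sq_def trunc_def by (rule suminf_cong) simp
  finally show ?thesis unfolding tail_l2sq_def .
qed

lemma tail_l2sq_nonneg: "u \<in> l2w \<mu> \<Longrightarrow> 0 \<le> tail_l2sq \<mu> n u"
  unfolding tail_l2sq_def
  by (rule suminf_nonneg, rule summable_comparison_test[OF _ summable_l2w]) auto

lemma powr_le_of_comparable:
  fixes a b K s :: real
  assumes a1: "1 \<le> a" and ab: "a \<le> b" and bK: "b \<le> K * a"
  shows "a powr s \<le> K powr \<bar>s\<bar> * b powr s"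
proof -
  have a0: "0 < a" and b0: "0 < b" using a1 ab by linarith+
  have "1 * a \<le> K * a" using ab bK by linarith
  then have K1: "1 \<le> K" using a0 by (simp only: mult_le_cancel_right)
  show ?thesis
  proof (cases "s \<ge> 0")
    case True
    have "a powr s \<le> b powr s" by (rule powr_mono2[OF True]) (use a0 ab in linarith)+
    also have "1 \<le> K powr \<bar>s\<bar>" by (rule ge_one_powr_ge_zero[OF K1]) simp
    then have "b powr s \<le> K powr \<bar>s\<bar> * b powr s"
      using mult_right_mono[of 1 "K powr \<bar>s\<bar>" "b powr s"] by simp
    finally show ?thesis .
  next
    case False
    have "a powr s = (b / a) powr (-s) * b powr s"
      using a0 b0 by (simp add: powr_divide powr_minus_divide)
    also have "(b / a) powr (-s) \<le> K powr (-s)"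
      by (rule powr_mono2) (use False a0 b0 bK in \<open>auto simp: divide_le_eq\<close>)
    then have "(b / a) powr (-s) * b powr s \<le> K powr (-s) * b powr s"
      by (rule mult_right_mono) simp
    finally show ?thesis using False by simp
  qed
qed

lemma powr_le_of_comparable':
  fixes a b K s :: real
  assumes a1: "1 \<le> a" and ab: "a \<le> b" and bK: "b \<le> K * a"
  shows "b powr s \<le> K powr \<bar>s\<bar> * a powr s"
proof -
  have a0: "0 < a" using a1 by linarith
  have "1 * a \<le> K * a" using ab bK by linarith
  then have K1: "1 \<le> K" using a0 by (simp only: mult_le_cancel_right)
  show ?thesis
  proof (cases "s \<ge> 0")
    case True
    have "b powr s \<le> (K * a) powr s" by (rule powr_mono2[OF True]) (use a0 ab bK in linarith)+
    also have "\<dots> = K powr \<bar>s\<bar> * a powr s" using True K1 a0 by (simp add: powr_mult)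
    finally show ?thesis .
  next
    case False
    have "b powr s \<le> a powr s" by (rule powr_mono2') (use False a0 ab in linarith)+
    also have "1 \<le> K powr \<bar>s\<bar>" by (rule ge_one_powr_ge_zero[OF K1]) simp
    then have "a powr s \<le> K powr \<bar>s\<bar> * a powr s"
      using mult_right_mono[of 1 "K powr \<bar>s\<bar>" "a powr s"] by simp
    finally show ?thesis .
  qed
qed

lemma weight_add_one: "(real j + 1) powr (2 * (\<mu> + 1)) = (real j + 1) powr (2 * \<mu>) * (real j + 1)^2"
  by (simp add: powr_add algebra_simps flip: powr_numeral)

lemma weight_shift_le: "(real j + 1) powr s \<le> (real m + 1) powr \<bar>s\<bar> * (real (j+m) + 1) powr s"
  by (rule powr_le_of_comparable) (auto simp: algebra_simps)

lemma weight_shift_ge: "(real (j+m) + 1) powr s \<le> (real m + 1) powr \<bar>s\<bar> * (real j + 1) powr s"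
  by (rule powr_le_of_comparable') (auto simp: algebra_simps)

section \<open>Bounded maps between weighted spaces\<close>

definition bounded_map :: "real \<Rightarrow> real \<Rightarrow> (cseq \<Rightarrow> cseq) \<Rightarrow> bool" where
  "bounded_map \<mu> \<nu> F \<longleftrightarrow> (\<exists>C\<ge>0. \<forall>v\<in>l2w \<mu>. F v \<in> l2w \<nu> \<and> l2sq \<nu> (F v) \<le> C * l2sq \<mu> v)"

lemma bounded_map_of_l2norm_bound:
  assumes "\<exists>C. \<forall>v\<in>l2w \<mu>. F v \<in> l2w \<nu> \<and> l2norm \<nu> (F v) \<le> C * l2norm \<mu> v"
  shows "bounded_map \<mu> \<nu> F"
proof -
  obtain C where C: "\<forall>v\<in>l2w \<mu>. F v \<in> l2w \<nu> \<and> l2norm \<nu> (F v) \<le> C * l2norm \<mu> v"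
    using assms by blast
  show ?thesis unfolding bounded_map_def
    by (intro exI[of _ "C^2"]) (use C in \<open>auto simp: l2norm_eq_sqrt_l2sq intro: l2sq_le_of_sqrt_le\<close>)
qed

lemma bounded_map_comp:
  assumes "bounded_map \<mu> \<nu> F" "bounded_map \<nu> \<rho> G"
  shows "bounded_map \<mu> \<rho> (\<lambda>v. G (F v))"
proof -
  obtain C1 where C1: "C1 \<ge> 0" "\<forall>v\<in>l2w \<mu>. F v \<in> l2w \<nu> \<and> l2sq \<nu> (F v) \<le> C1 * l2sq \<mu> v"
    using assms(1) unfolding bounded_map_def by blast
  obtain C2 where C2: "C2 \<ge> 0" "\<forall>v\<in>l2w \<nu>. G v \<in> l2w \<rho> \<and> l2sq \<rho> (G v) \<le> C2 * l2sq \<nu> v"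
    using assms(2) unfolding bounded_map_def by blast
  show ?thesis unfolding bounded_map_def
  proof (intro exI[of _ "C2 * C1"] conjI ballI)
    fix v assume v: "v \<in> l2w \<mu>"
    show "G (F v) \<in> l2w \<rho>" using C1 C2 v by blast
    have "l2sq \<rho> (G (F v)) \<le> C2 * l2sq \<nu> (F v)" using C1 C2 v by blast
    also have "\<dots> \<le> C2 * (C1 * l2sq \<mu> v)" using C1 C2 v by (intro mult_left_mono) auto
    finally show "l2sq \<rho> (G (F v)) \<le> C2 * C1 * l2sq \<mu> v" by simp
  qed (use C1 C2 in auto)
qed

lemma bounded_map_weight_mono: "\<nu>' \<le> \<nu> \<Longrightarrow> bounded_map \<mu> \<nu> F \<Longrightarrow> bounded_map \<mu> \<nu>' F"
  unfolding bounded_map_def by (meson l2w_weight_mono order_trans)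

lemma cmod_add_sq_le: "(cmod (a + b))^2 \<le> 2 * (cmod a)^2 + 2 * (cmod b)^2"
proof -
  have "(cmod (a + b))^2 \<le> (cmod a + cmod b)^2" by (intro power_mono norm_triangle_ineq) auto
  moreover have "0 \<le> (cmod a - cmod b)^2" by simp
  ultimately show ?thesis unfolding power2_sum power2_diff by linarith
qed

lemma bounded_map_add:
  assumes "bounded_map \<mu> \<nu> F" "bounded_map \<mu> \<nu> G"
  shows "bounded_map \<mu> \<nu> (\<lambda>v j. F v j + G v j)"
proof -
  obtain C1 where C1: "C1 \<ge> 0" "\<forall>v\<in>l2w \<mu>. F v \<in> l2w \<nu> \<and> l2sq \<nu> (F v) \<le> C1 * l2sq \<mu> v"
    using assms(1) unfolding bounded_map_def by blast
  obtain C2 where C2: "C2 \<ge> 0" "\<forall>v\<in>l2w \<mu>. G v \<in> l2w \<nu> \<and> l2sq \<nu> (G v) \<le> C2 * l2sq \<mu> v"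
    using assms(2) unfolding bounded_map_def by blast
  show ?thesis unfolding bounded_map_def
  proof (intro exI[of _ "2 * C1 + 2 * C2"] conjI ballI)
    fix v assume v: "v \<in> l2w \<mu>"
    define w where "w k = (real k + 1) powr (2 * \<nu>)" for k
    have sF: "summable (\<lambda>k. (cmod (F v k))^2 * w k)" using C1 v unfolding l2w_def w_def by blast
    have sG: "summable (\<lambda>k. (cmod (G v k))^2 * w k)" using C2 v unfolding l2w_def w_def by blast
    have le: "(cmod (F v k + G v k))^2 * w k \<le> 2 * ((cmod (F v k))^2 * w k) + 2 * ((cmod (G v k))^2 * w k)" for k
      using mult_right_mono[OF cmod_add_sq_le[of "F v k" "G v k"], of "w k"] by (simp add: w_def algebra_simps)
    have sS: "summable (\<lambda>k. 2 * ((cmod (F v k))^2 * w k) + 2 * ((cmod (G v k))^2 * w k))"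
      using sF sG by (intro summable_add summable_mult)
    have sm: "summable (\<lambda>k. (cmod (F v k + G v k))^2 * w k)"
      by (rule summable_comparison_test[OF _ sS]) (use le in \<open>auto simp: w_def\<close>)
    then show "(\<lambda>j. F v j + G v j) \<in> l2w \<nu>" unfolding l2w_def w_def by simp
    have "l2sq \<nu> (\<lambda>j. F v j + G v j) \<le> (\<Sum>k. 2 * ((cmod (F v k))^2 * w k) + 2 * ((cmod (G v k))^2 * w k))"
      unfolding l2sq_def w_def[symmetric] by (rule suminf_le[OF le sm sS])
    also have "\<dots> = 2 * l2sq \<nu> (F v) + 2 * l2sq \<nu> (G v)"
      unfolding l2sq_def w_def[symmetric] using sF sG
      by (subst suminf_add[symmetric]) (auto intro: summable_mult simp: suminf_mult)
    also have "\<dots> \<le> 2 * (C1 * l2sq \<mu> v) + 2 * (C2 * l2sq \<mu> v)" using C1 C2 v by (intro add_mono) auto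
    finally show "l2sq \<nu> (\<lambda>j. F v j + G v j) \<le> (2 * C1 + 2 * C2) * l2sq \<mu> v"
      by (simp add: algebra_simps)
  qed (use C1 C2 in auto)
qed

lemma bounded_map_sum:
  "finite I \<Longrightarrow> (\<And>i. i \<in> I \<Longrightarrow> bounded_map \<mu> \<nu> (F i)) \<Longrightarrow> bounded_map \<mu> \<nu> (\<lambda>v j. \<Sum>i\<in>I. F i v j)"
proof (induction I rule: finite_induct)
  case empty
  then show ?case unfolding bounded_map_def l2w_def l2sq_def by auto
next
  case (insert x I)
  then have "bounded_map \<mu> \<nu> (\<lambda>v j. F x v j + (\<Sum>i\<in>I. F i v j))" by (intro bounded_map_add) auto
  with insert show ?case by simp
qed

lemma bounded_map_weighted_shift:
  fixes c :: "nat \<Rightarrow> complex"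
  assumes C: "C \<ge> 0"
    and c: "\<And>j. (cmod (c j))^2 * (real j + 1) powr (2*\<nu>) \<le> C * (real (j+m) + 1) powr (2*\<mu>)"
  shows "bounded_map \<mu> \<nu> (\<lambda>v j. c j * v (j+m))"
  unfolding bounded_map_def
proof (intro exI[of _ C] conjI ballI)
  fix v assume v: "v \<in> l2w \<mu>"
  define s where "s k = (cmod (v k))^2 * (real k + 1) powr (2 * \<mu>)" for k
  have s: "summable s" using summable_l2w[OF v] unfolding s_def .
  have s0: "s k \<ge> 0" for k unfolding s_def by simp
  have ss: "summable (\<lambda>j. s (j+m))" using s by (simp add: summable_iff_shift)
  have le: "(cmod (c j * v (j+m)))^2 * (real j + 1) powr (2*\<nu>) \<le> C * s (j+m)" for j
  proof -
    have "(cmod (c j * v (j+m)))^2 * (real j + 1) powr (2*\<nu>)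
        = ((cmod (c j))^2 * (real j + 1) powr (2*\<nu>)) * (cmod (v (j+m)))^2"
      by (simp add: norm_mult power_mult_distrib)
    also have "\<dots> \<le> (C * (real (j+m) + 1) powr (2*\<mu>)) * (cmod (v (j+m)))^2"
      using c by (intro mult_right_mono) auto
    finally show ?thesis unfolding s_def by (simp add: algebra_simps)
  qed
  have sm: "summable (\<lambda>j. (cmod (c j * v (j+m)))^2 * (real j + 1) powr (2*\<nu>))"
    by (rule summable_comparison_test[where g="\<lambda>j. C * s (j+m)"]) (use le ss in auto)
  then show "(\<lambda>j. c j * v (j + m)) \<in> l2w \<nu>" unfolding l2w_def by simp
  have "l2sq \<nu> (\<lambda>j. c j * v (j + m)) \<le> (\<Sum>j. C * s (j+m))"
    unfolding l2sq_def by (rule suminf_le) (use le sm ss in auto)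
  also have "\<dots> = C * (\<Sum>j. s (j+m))" using ss by (rule suminf_mult)
  also have "(\<Sum>j. s (j+m)) \<le> (\<Sum>j. s j)"
    using suminf_split_initial_segment[OF s, of m] s0 by (simp add: sum_nonneg)
  then have "C * (\<Sum>j. s (j+m)) \<le> C * (\<Sum>j. s j)" using C by (rule mult_left_mono)
  finally show "l2sq \<nu> (\<lambda>j. c j * v (j + m)) \<le> C * l2sq \<mu> v" unfolding l2sq_def s_def .
qed (use C in auto)

lemma bounded_map_id: "bounded_map \<mu> \<mu> (\<lambda>v. v)"
  using bounded_map_weighted_shift[of 1 "\<lambda>_. 1" \<mu> 0 \<mu>] by simp

section \<open>Mapping properties of the building blocks\<close>

lemma bounded_map_Sop0: "bounded_map \<mu> \<mu> (Sop 0)"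
proof -
  let ?c1 = "\<lambda>j::nat. if j = 0 then 1 else (1/2::complex)"
  let ?c2 = "\<lambda>j::nat. (-1/2::complex)"
  have b1: "bounded_map \<mu> \<mu> (\<lambda>v j. ?c1 j * v (j+0))"
    by (rule bounded_map_weighted_shift[where C=1]) (auto simp: power2_eq_square)
  have b2: "bounded_map \<mu> \<mu> (\<lambda>v j. ?c2 j * v (j+2))"
  proof (rule bounded_map_weighted_shift[where C="3 powr \<bar>2*\<mu>\<bar>"])
    fix j
    have "(cmod (?c2 j))^2 * (real j + 1) powr (2*\<mu>) \<le> (real j + 1) powr (2*\<mu>)"
      by (simp add: power2_eq_square)
    also have "\<dots> \<le> (real 2 + 1) powr \<bar>2*\<mu>\<bar> * (real (j+2) + 1) powr (2*\<mu>)"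
      by (rule weight_shift_le)
    finally show "(cmod (?c2 j))^2 * (real j + 1) powr (2*\<mu>) \<le> 3 powr \<bar>2*\<mu>\<bar> * (real (j+2) + 1) powr (2*\<mu>)"
      by simp
  qed simp
  have "Sop 0 = (\<lambda>v j. ?c1 j * v (j+0) + ?c2 j * v (j+2))"
    by (auto simp: fun_eq_iff Sop_def diff_divide_distrib numeral_2_eq_2)
  then show ?thesis using bounded_map_add[OF b1 b2] by simp
qed

lemma bounded_map_Sop: "l \<ge> 1 \<Longrightarrow> bounded_map \<mu> (\<mu>+1) (Sop l)"
proof -
  assume l: "l \<ge> 1"
  have le: "(real l / real (l + j + i))^2 * (real j + 1) powr (2*(\<mu>+1)) \<le> (real l)^2 * (real j + 1) powr (2*\<mu>)"
    for i j
  proof -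
    have "(real l / real (l + j + i)) * (real j + 1) \<le> real l"
      using l by (simp add: divide_simps)
    then have "((real l / real (l + j + i)) * (real j + 1))^2 \<le> (real l)^2"
      by (intro power_mono) auto
    then have "((real l / real (l + j + i)) * (real j + 1))^2 * (real j + 1) powr (2*\<mu>)
        \<le> (real l)^2 * (real j + 1) powr (2*\<mu>)"
      by (rule mult_right_mono) simp
    then show ?thesis unfolding weight_add_one power_mult_distrib by (simp only: mult_ac)
  qed
  let ?c1 = "\<lambda>j::nat. complex_of_real (real l / real (l + j))"
  let ?c2 = "\<lambda>j::nat. - complex_of_real (real l / real (l + j + 2))"
  have b1: "bounded_map \<mu> (\<mu>+1) (\<lambda>v j. ?c1 j * v (j+0))"
  proof (rule bounded_map_weighted_shift[where C="(real l)^2"])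
    fix j
    show "(cmod (?c1 j))^2 * (real j + 1) powr (2*(\<mu>+1)) \<le> (real l)^2 * (real (j+0) + 1) powr (2*\<mu>)"
      using le[where i=0 and j=j] by (simp only: norm_of_real power2_abs add_0_right)
  qed simp
  have b2: "bounded_map \<mu> (\<mu>+1) (\<lambda>v j. ?c2 j * v (j+2))"
  proof (rule bounded_map_weighted_shift[where C="(real l)^2 * 3 powr \<bar>2*\<mu>\<bar>"])
    fix j
    have "(cmod (?c2 j))^2 * (real j + 1) powr (2*(\<mu>+1)) \<le> (real l)^2 * (real j + 1) powr (2*\<mu>)"
      using le[where i=2 and j=j] by (simp only: norm_minus_cancel norm_of_real power2_abs)
    also have "\<dots> \<le> (real l)^2 * ((real 2 + 1) powr \<bar>2*\<mu>\<bar> * (real (j+2) + 1) powr (2*\<mu>))"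
      by (intro mult_left_mono weight_shift_le) auto
    finally show "(cmod (?c2 j))^2 * (real j + 1) powr (2*(\<mu>+1)) \<le> (real l)^2 * 3 powr \<bar>2*\<mu>\<bar> * (real (j+2) + 1) powr (2*\<mu>)"
      by (simp add: mult.assoc)
  qed simp
  have "Sop l = (\<lambda>v j. ?c1 j * v (j+0) + ?c2 j * v (j+2))"
    unfolding Sop_def using l by (auto simp: fun_eq_iff algebra_simps)
  then show ?thesis using bounded_map_add[OF b1 b2] by simp
qed

lemma bounded_map_Schain: "l \<ge> 1 \<Longrightarrow> bounded_map \<mu> (\<mu> + real m) (Schain l m)"
proof (induction m)
  case 0
  then show ?case using bounded_map_id by simp
next
  case (Suc m)
  then have "bounded_map \<mu> (\<mu> + real m + 1) (\<lambda>v. Sop (l+m) (Schain l m v))"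
    by (intro bounded_map_comp[OF _ bounded_map_Sop]) auto
  moreover have "\<mu> + real (Suc m) = \<mu> + real m + 1" by simp
  ultimately show ?case by (simp only: Schain.simps)
qed

lemma Schain_Suc_left: "Schain l (Suc m) v = Schain (Suc l) m (Sop l v)"
  by (induction m) auto

lemma bounded_map_Dop: "l \<ge> 1 \<Longrightarrow> bounded_map (\<mu>+1) \<mu> (Dop l)"
proof -
  assume l: "l \<ge> 1"
  define K :: real where "K = 2^(l - 1) * fact (l - 1)"
  let ?c = "\<lambda>j::nat. complex_of_real (K * real (j + l))"
  have "bounded_map (\<mu>+1) \<mu> (\<lambda>v j. ?c j * v (j+l))"
  proof (rule bounded_map_weighted_shift[where C="K^2 * (real l + 1) powr \<bar>2*\<mu>\<bar>"])
    fix j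
    have "(cmod (?c j))^2 * (real j + 1) powr (2*\<mu>) = K^2 * (real (j+l))^2 * (real j + 1) powr (2*\<mu>)"
      by (simp only: norm_of_real power2_abs power_mult_distrib)
    also have "\<dots> \<le> K^2 * (real (j+l) + 1)^2 * ((real l + 1) powr \<bar>2*\<mu>\<bar> * (real (j+l) + 1) powr (2*\<mu>))"
      by (intro mult_mono power_mono mult_left_mono weight_shift_le) auto
    also have "\<dots> = K^2 * (real l + 1) powr \<bar>2*\<mu>\<bar> * (real (j+l) + 1) powr (2*(\<mu>+1))"
      unfolding weight_add_one[of "j+l"] by (simp only: mult_ac)
    finally show "(cmod (?c j))^2 * (real j + 1) powr (2*\<mu>) \<le> K^2 * (real l + 1) powr \<bar>2*\<mu>\<bar> * (real (j+l) + 1) powr (2*(\<mu>+1))" .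
  qed simp
  moreover have "Dop l = (\<lambda>v j. ?c j * v (j+l))"
    unfolding Dop_def K_def by (simp add: fun_eq_iff)
  ultimately show ?thesis by simp
qed

definition rdiag :: "nat \<Rightarrow> nat \<Rightarrow> real" where
  "rdiag N k = 1 / (2^(N - 1) * fact (N - 1)) * (if k < N then 1 else 1 / real k)"

lemma Rop_eq_rdiag: "Rop N u = (\<lambda>k. complex_of_real (rdiag N k) * u k)"
  unfolding Rop_def rdiag_def ..

text \<open>\<open>rdiag N k\<close> is comparable to \<open>1 / (k + 1)\<close>, so \<open>Rop N\<close> gains exactly one unit of weight.\<close>

lemma rdiag_weight_bounds:
  assumes N: "N \<ge> 1"
  shows "1 / (2^(N - 1) * fact (N - 1)) \<le> rdiag N k * (real k + 1)"
    and "rdiag N k * (real k + 1) \<le> (real N + 1) / (2^(N - 1) * fact (N - 1))"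
proof -
  have "(if k < N then 1 else 1 / real k) * (real k + 1) \<le> real N + 1"
  proof (cases "k < N")
    case False
    then have "(real k + 1) / real k \<le> 2" using N by (simp add: divide_simps)
    then show ?thesis using False N by simp
  qed simp
  moreover have "1 \<le> (if k < N then 1 else 1 / real k) * (real k + 1)"
    using N by (auto simp: divide_simps not_less)
  ultimately show "1 / (2^(N - 1) * fact (N - 1)) \<le> rdiag N k * (real k + 1)"
    and "rdiag N k * (real k + 1) \<le> (real N + 1) / (2^(N - 1) * fact (N - 1))"
    unfolding rdiag_def by (simp_all add: divide_simps)
qed

lemma bounded_map_Rop: "N \<ge> 1 \<Longrightarrow> bounded_map \<mu> (\<mu>+1) (Rop N)"
proof -
  assume N: "N \<ge> 1"
  define c :: real where "c = (real N + 1) / (2^(N - 1) * fact (N - 1))"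
  have "bounded_map \<mu> (\<mu>+1) (\<lambda>v j. complex_of_real (rdiag N j) * v (j+0))"
  proof (rule bounded_map_weighted_shift[where C="c^2"])
    fix j
    have "0 \<le> 1 / (2^(N - 1) * fact (N - 1) :: real)" by simp
    then have "0 \<le> rdiag N j * (real j + 1)"
      using rdiag_weight_bounds(1)[OF N, of j] by linarith
    then have "(rdiag N j * (real j + 1))^2 \<le> c^2"
      using rdiag_weight_bounds(2)[OF N, of j] unfolding c_def by (intro power_mono) auto
    then have "(rdiag N j * (real j + 1))^2 * (real j + 1) powr (2*\<mu>) \<le> c^2 * (real j + 1) powr (2*\<mu>)"
      by (rule mult_right_mono) simp
    then show "(cmod (complex_of_real (rdiag N j)))^2 * (real j + 1) powr (2*(\<mu>+1)) \<le> c^2 * (real (j+0) + 1) powr (2*\<mu>)"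
      unfolding weight_add_one by (simp add: power_mult_distrib mult_ac)
  qed simp
  then show ?thesis by (simp add: Rop_eq_rdiag[abs_def])
qed

lemma l2sq_le_Rop:
  assumes N: "N \<ge> 1" and R: "Rop N v \<in> l2w (\<mu>+1)"
  shows "l2sq \<mu> v \<le> (2^(N - 1) * fact (N - 1))^2 * l2sq (\<mu>+1) (Rop N v)"
proof -
  define K :: real where "K = 2^(N - 1) * fact (N - 1)"
  have K0: "K > 0" unfolding K_def by simp
  have le: "(cmod (v k))^2 * (real k + 1) powr (2 * \<mu>)
        \<le> K^2 * ((cmod (Rop N v k))^2 * (real k + 1) powr (2 * (\<mu>+1)))" for k
  proof -
    have "1 / K \<le> rdiag N k * (real k + 1)"
      using rdiag_weight_bounds(1)[OF N, of k] unfolding K_def .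
    then have "1 \<le> K * (rdiag N k * (real k + 1))"
      using K0 by (simp add: pos_divide_le_eq mult.commute)
    then have "1 \<le> (K * (rdiag N k * (real k + 1)))^2"
      by (simp add: one_le_power)
    then have "1 * ((cmod (v k))^2 * (real k + 1) powr (2 * \<mu>))
        \<le> (K * (rdiag N k * (real k + 1)))^2 * ((cmod (v k))^2 * (real k + 1) powr (2 * \<mu>))"
      by (intro mult_right_mono) auto
    then show ?thesis
      unfolding Rop_eq_rdiag weight_add_one norm_mult norm_of_real power_mult_distrib power2_abs
      by (simp add: mult_ac)
  qed
  have sR: "summable (\<lambda>k. (cmod (Rop N v k))^2 * (real k + 1) powr (2 * (\<mu>+1)))"
    using summable_l2w[OF R] .
  have sv: "summable (\<lambda>k. (cmod (v k))^2 * (real k + 1) powr (2 * \<mu>))"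
    by (rule summable_comparison_test[OF _ summable_mult[OF sR]]) (use le in auto)
  have "l2sq \<mu> v \<le> (\<Sum>k. K^2 * ((cmod (Rop N v k))^2 * (real k + 1) powr (2 * (\<mu>+1))))"
    unfolding l2sq_def by (rule suminf_le[OF le sv summable_mult[OF sR]])
  also have "\<dots> = K^2 * l2sq (\<mu>+1) (Rop N v)" unfolding l2sq_def by (rule suminf_mult[OF sR])
  finally show ?thesis unfolding K_def .
qed

definition Llow :: "nat \<Rightarrow> (nat \<Rightarrow> real \<Rightarrow> complex) \<Rightarrow> cseq \<Rightarrow> cseq" where
  "Llow N a u = (\<lambda>j. (\<Sum>lam = 1..N - 1. Schain lam (N - lam) (Mop lam (a lam) (Dop lam u)) j)
      + Schain 0 N (Mop 0 (a 0) u) j)"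

lemma BLop_Rop_tail:
  assumes N: "N \<ge> 1" and j: "j \<ge> N"
  shows "BLop N B a (Rop N x) j = x j + Llow N a (Rop N x) (j - N)"
proof -
  have "Dop N (Rop N x) (j - N) = x j"
    unfolding Dop_def Rop_def using N j by (simp add: field_simps)
  then show ?thesis using j unfolding BLop_def Lop_def Llow_def by (simp add: add.assoc)
qed

lemma bounded_map_Llow_Rop:
  assumes N: "N \<ge> 1" and M: "\<And>l \<mu>. l < N \<Longrightarrow> bounded_map \<mu> \<mu> (Mop l (a l))"
  shows "bounded_map \<mu> (\<mu>+1) (\<lambda>x. Llow N a (Rop N x))"
proof -
  have high: "bounded_map \<mu> (\<mu>+1) (\<lambda>x j. Schain l (N-l) (Mop l (a l) (Dop l (Rop N x))) j)"
    if l: "l \<in> {1..N-1}" for l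
  proof -
    have "bounded_map \<mu> (\<mu> + real (N-l)) (\<lambda>x. Schain l (N-l) (Mop l (a l) (Dop l (Rop N x))))"
      using l by (intro bounded_map_comp[OF bounded_map_comp[OF bounded_map_comp[OF
            bounded_map_Rop[OF N] bounded_map_Dop] M] bounded_map_Schain]) auto
    then show ?thesis by (rule bounded_map_weight_mono[rotated]) (use l in auto)
  qed
  have "Schain 0 N v = Schain 1 (N-1) (Sop 0 v)" for v
    using Schain_Suc_left[of 0 "N-1" v] N by simp
  moreover have "bounded_map \<mu> (\<mu> + 1 + real (N-1)) (\<lambda>x. Schain 1 (N-1) (Sop 0 (Mop 0 (a 0) (Rop N x))))"
    using N by (intro bounded_map_comp[OF bounded_map_comp[OF bounded_map_comp[OF
          bounded_map_Rop[OF N] M] bounded_map_Sop0] bounded_map_Schain]) auto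
  ultimately have low: "bounded_map \<mu> (\<mu>+1) (\<lambda>x j. Schain 0 N (Mop 0 (a 0) (Rop N x)) j)"
    by (intro bounded_map_weight_mono[of "\<mu>+1" "\<mu> + 1 + real (N-1)"]) auto
  show ?thesis
    unfolding Llow_def by (intro bounded_map_add low bounded_map_sum high) auto
qed

section \<open>Linearity on finitely supported sequences\<close>

definition finsupp :: "cseq \<Rightarrow> bool" where
  "finsupp u \<longleftrightarrow> (\<exists>n. u \<in> fin_space n)"

lemma fin_space_subset_l2w: "fin_space n \<subseteq> l2w \<mu>"
  unfolding l2w_def fin_space_def by (auto intro!: summable_finite[of "{..<n}"]) (meson leI)

lemma finsupp_l2w: "finsupp u \<Longrightarrow> u \<in> l2w \<mu>"
  unfolding finsupp_def using fin_space_subset_l2w by blast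

lemma finsupp_summable:
  assumes "finsupp u"
  shows "summable (\<lambda>k. c k * u k)"
proof -
  obtain n where n: "\<forall>k\<ge>n. u k = 0" using assms unfolding finsupp_def fin_space_def by blast
  show ?thesis by (rule summable_finite[of "{..<n}"]) (use n in auto)
qed

lemma finsupp_Dop:
  assumes "finsupp u"
  shows "finsupp (Dop l u)"
proof -
  obtain n where "u \<in> fin_space n" using assms unfolding finsupp_def by blast
  then have "Dop l u \<in> fin_space n" unfolding fin_space_def Dop_def by auto
  then show ?thesis unfolding finsupp_def by blast
qed

lemma trunc_in_fin_space: "trunc n u \<in> fin_space n"
  unfolding trunc_def fin_space_def by simp

lemma finsupp_trunc: "finsupp (trunc n u)"
  unfolding finsupp_def using trunc_in_fin_space by blast

lemma Rop_in_fin_space: "x \<in> fin_space n \<Longrightarrow> Rop N x \<in> fin_space n"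
  unfolding fin_space_def Rop_def by simp

lemma trunc_fin_space: "x \<in> fin_space n \<Longrightarrow> trunc n x = x"
  unfolding fin_space_def trunc_def by (auto simp: fun_eq_iff not_less)

lemma Sop_add: "Sop l (\<lambda>k. u k + v k) = (\<lambda>j. Sop l u j + Sop l v j)"
proof
  fix j
  show "Sop l (\<lambda>k. u k + v k) j = Sop l u j + Sop l v j"
  proof (cases "l = 0")
    case True
    then show ?thesis by (cases "j = 0") (simp_all add: Sop_def field_simps)
  qed (simp add: Sop_def ring_distribs)
qed

lemma Sop_smult: "Sop l (\<lambda>k. c * u k) = (\<lambda>j. c * Sop l u j)"
  by (auto simp: Sop_def fun_eq_iff algebra_simps)

lemma Schain_add: "Schain l m (\<lambda>k. u k + v k) = (\<lambda>j. Schain l m u j + Schain l m v j)"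
  by (induction m) (simp_all add: Sop_add)

lemma Schain_smult: "Schain l m (\<lambda>k. c * u k) = (\<lambda>j. c * Schain l m u j)"
  by (induction m) (simp_all add: Sop_smult)

lemma Dop_add: "Dop l (\<lambda>k. u k + v k) = (\<lambda>j. Dop l u j + Dop l v j)"
  by (auto simp: Dop_def fun_eq_iff algebra_simps)

lemma Dop_smult: "Dop l (\<lambda>k. c * u k) = (\<lambda>j. c * Dop l u j)"
  by (auto simp: Dop_def fun_eq_iff algebra_simps)

lemma Mop_add: "finsupp u \<Longrightarrow> finsupp v \<Longrightarrow> Mop l a (\<lambda>k. u k + v k) = (\<lambda>j. Mop l a u j + Mop l a v j)"
proof
  fix j assume u: "finsupp u" and v: "finsupp v"
  have "(\<Sum>k. Mmat l a j k * (u k + v k)) = (\<Sum>k. Mmat l a j k * u k + Mmat l a j k * v k)"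
    by (simp add: distrib_left)
  also have "\<dots> = (\<Sum>k. Mmat l a j k * u k) + (\<Sum>k. Mmat l a j k * v k)"
    by (rule suminf_add[symmetric, OF finsupp_summable[OF u] finsupp_summable[OF v]])
  finally show "Mop l a (\<lambda>k. u k + v k) j = Mop l a u j + Mop l a v j" unfolding Mop_def .
qed

lemma Mop_smult: "finsupp u \<Longrightarrow> Mop l a (\<lambda>k. c * u k) = (\<lambda>j. c * Mop l a u j)"
proof
  fix j assume u: "finsupp u"
  have "(\<Sum>k. Mmat l a j k * (c * u k)) = (\<Sum>k. c * (Mmat l a j k * u k))"
    by (simp add: algebra_simps)
  also have "\<dots> = c * (\<Sum>k. Mmat l a j k * u k)"
    by (rule suminf_mult[OF finsupp_summable[OF u]])
  finally show "Mop l a (\<lambda>k. c * u k) j = c * Mop l a u j" unfolding Mop_def .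
qed

lemma Lop_add: "finsupp u \<Longrightarrow> finsupp v \<Longrightarrow> Lop N a (\<lambda>k. u k + v k) = (\<lambda>j. Lop N a u j + Lop N a v j)"
  by (simp add: Lop_def fun_eq_iff Dop_add Mop_add finsupp_Dop Schain_add sum.distrib algebra_simps)

lemma Lop_smult: "finsupp u \<Longrightarrow> Lop N a (\<lambda>k. c * u k) = (\<lambda>j. c * Lop N a u j)"
  by (simp add: Lop_def fun_eq_iff Dop_smult Mop_smult finsupp_Dop Schain_smult sum_distrib_left algebra_simps)

lemma BLop_add:
  assumes "\<forall>i<N. \<forall>u \<in> l2w \<mu>. \<forall>v \<in> l2w \<mu>. B i (\<lambda>k. u k + v k) = B i u + B i v"
    and "finsupp u" "finsupp v"
  shows "BLop N B a (\<lambda>k. u k + v k) = (\<lambda>j. BLop N B a u j + BLop N B a v j)"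
  using assms finsupp_l2w[OF assms(2)] finsupp_l2w[OF assms(3)]
  by (auto simp: BLop_def fun_eq_iff Lop_add[OF assms(2,3)])

lemma BLop_smult:
  assumes "\<forall>i<N. \<forall>c. \<forall>u \<in> l2w \<mu>. B i (\<lambda>k. c * u k) = c * B i u" and "finsupp u"
  shows "BLop N B a (\<lambda>k. c * u k) = (\<lambda>j. c * BLop N B a u j)"
  using assms finsupp_l2w[OF assms(2)] by (auto simp: BLop_def fun_eq_iff Lop_smult[OF assms(2)])

lemma An_Rn_add:
  assumes "\<forall>i<N. \<forall>u \<in> l2w \<mu>. \<forall>v \<in> l2w \<mu>. B i (\<lambda>k. u k + v k) = B i u + B i v"
  shows "(An N B a n \<circ> Rn N n) (\<lambda>k. x k + y k) = (\<lambda>k. (An N B a n \<circ> Rn N n) x k + (An N B a n \<circ> Rn N n) y k)"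
proof -
  have "trunc n (\<lambda>k. u k + v k) = (\<lambda>k. trunc n u k + trunc n v k)" for u v
    by (auto simp: trunc_def fun_eq_iff)
  moreover have "Rn N n (\<lambda>k. x k + y k) = (\<lambda>k. Rn N n x k + Rn N n y k)"
    by (auto simp: Rn_def trunc_def Rop_eq_rdiag fun_eq_iff ring_distribs)
  ultimately show ?thesis
    unfolding An_def comp_def by (simp add: BLop_add[OF assms finsupp_trunc finsupp_trunc])
qed

lemma An_Rn_smult:
  assumes "\<forall>i<N. \<forall>c. \<forall>u \<in> l2w \<mu>. B i (\<lambda>k. c * u k) = c * B i u"
  shows "(An N B a n \<circ> Rn N n) (\<lambda>k. c * x k) = (\<lambda>k. c * (An N B a n \<circ> Rn N n) x k)"
proof -
  have "trunc n (\<lambda>k. c * u k) = (\<lambda>k. c * trunc n u k)" for u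
    by (auto simp: trunc_def fun_eq_iff)
  moreover have "Rn N n (\<lambda>k. c * x k) = (\<lambda>k. c * Rn N n x k)"
    by (auto simp: Rn_def trunc_def Rop_eq_rdiag fun_eq_iff)
  ultimately show ?thesis
    unfolding An_def comp_def by (simp add: BLop_smult[OF assms finsupp_trunc])
qed

lemma An_Rn_in_fin_space: "(An N B a n \<circ> Rn N n) x \<in> fin_space n"
  unfolding An_def comp_def by (rule trunc_in_fin_space)

lemma An_Rn_eq_trunc_BLop_Rop:
  assumes "x \<in> fin_space n"
  shows "(An N B a n \<circ> Rn N n) x = trunc n (BLop N B a (Rop N x))"
  using assms by (simp add: An_def Rn_def trunc_fin_space Rop_in_fin_space)

definition cscale :: "complex \<Rightarrow> cseq \<Rightarrow> cseq" where
  "cscale c x = (\<lambda>k. c * x k)"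

interpretation cseq: vector_space cscale
  by unfold_locales (auto simp: cscale_def algebra_simps fun_eq_iff)

definition unit_seq :: "nat \<Rightarrow> cseq" where
  "unit_seq i = (\<lambda>k. if k = i then 1 else 0)"

lemma sum_cseq_apply: "(sum f A) (k::nat) = (\<Sum>a\<in>A. (f a k :: complex))"
  by (induction A rule: infinite_finite_induct) auto

lemma span_unit_seq: "cseq.span (unit_seq ` {..<n}) = fin_space n"
proof
  have "cseq.subspace (fin_space n)"
    unfolding cseq.subspace_def fin_space_def by (auto simp: cscale_def)
  then show "cseq.span (unit_seq ` {..<n}) \<subseteq> fin_space n"
    by (rule cseq.span_minimal[rotated]) (auto simp: unit_seq_def fin_space_def)
  show "fin_space n \<subseteq> cseq.span (unit_seq ` {..<n})"
  proof
    fix x assume x: "x \<in> fin_space n"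
    have "x k = (\<Sum>i<n. cscale (x i) (unit_seq i)) k" for k
      using x unfolding sum_cseq_apply cscale_def unit_seq_def fin_space_def
      by (cases "k < n") (simp_all add: if_distrib cong: if_cong)
    then have "x = (\<Sum>i<n. cscale (x i) (unit_seq i))" ..
    also have "\<dots> \<in> cseq.span (unit_seq ` {..<n})"
      by (intro cseq.span_sum cseq.span_scale cseq.span_base) auto
    finally show "x \<in> cseq.span (unit_seq ` {..<n})" .
  qed
qed

lemma independent_unit_seq: "cseq.independent (unit_seq ` {..<n})"
proof (rule cseq.independent_if_scalars_zero)
  fix f x assume s: "(\<Sum>x\<in>unit_seq ` {..<n}. cscale (f x) x) = 0" and x: "x \<in> unit_seq ` {..<n}"
  then obtain i where i: "i < n" "x = unit_seq i" by auto
  have "0 = (\<Sum>y\<in>unit_seq ` {..<n}. f y * y i)"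
    using fun_cong[OF s, of i] by (simp add: sum_cseq_apply cscale_def)
  also have "\<dots> = f x * x i"
    by (rule sum.remove[OF _ x, THEN trans]) (auto intro!: sum.neutral simp: i unit_seq_def split: if_splits)
  finally show "f x = 0" using i by (simp add: unit_seq_def)
qed simp

lemma card_unit_seq: "card (unit_seq ` {..<n}) = n"
proof -
  have "inj unit_seq" unfolding inj_def unit_seq_def fun_eq_iff by (metis one_neq_zero)
  then show ?thesis by (simp add: card_image inj_on_subset)
qed

lemma linear_inj_on_fin_space_imp_surj:
  fixes F :: "cseq \<Rightarrow> cseq"
  assumes add: "\<And>x y. F (\<lambda>k. x k + y k) = (\<lambda>k. F x k + F y k)"
    and smult: "\<And>c x. F (\<lambda>k. c * x k) = (\<lambda>k. c * F x k)"
    and into: "\<And>x. x \<in> fin_space n \<Longrightarrow> F x \<in> fin_space n"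
    and inj: "inj_on F (fin_space n)"
  shows "F ` fin_space n = fin_space n"
proof -
  interpret F: module_hom cscale cscale F
    unfolding module_hom_iff
    by (intro conjI cseq.module_axioms allI) (simp_all only: plus_fun_def cscale_def add smult)
  let ?E = "unit_seq ` {..<n}"
  have E: "?E \<subseteq> fin_space n"
    using cseq.span_superset[of ?E] unfolding span_unit_seq .
  have indep: "cseq.independent (F ` ?E)"
    by (rule F.independent_injective_image[OF independent_unit_seq]) (simp only: span_unit_seq inj)
  have card: "card (F ` ?E) = n"
    using card_unit_seq card_image[OF inj_on_subset[OF inj E]] by simp
  have FE: "F ` ?E \<subseteq> fin_space n" using E into by blast
  have "fin_space n \<subseteq> cseq.span (F ` ?E)"
  proof
    fix y assume y: "y \<in> fin_space n"
    show "y \<in> cseq.span (F ` ?E)"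
    proof (rule ccontr)
      assume y': "y \<notin> cseq.span (F ` ?E)"
      have "cseq.independent (insert y (F ` ?E))" by (rule cseq.independent_insertI[OF y' indep])
      moreover have "insert y (F ` ?E) \<subseteq> cseq.span ?E"
        unfolding span_unit_seq insert_subset using y FE by (rule conjI)
      ultimately have "card (insert y (F ` ?E)) \<le> card ?E"
        by (rule conjunct2[OF cseq.independent_span_bound[OF finite_imageI[OF finite_lessThan]]])
      moreover have "y \<notin> F ` ?E" using y' cseq.span_base[of y "F ` ?E"] by (rule contrapos_nn)
      then have "card (insert y (F ` ?E)) = Suc (card (F ` ?E))"
        by (intro card_insert_disjoint finite_imageI finite_lessThan)
      ultimately show False unfolding card card_unit_seq by simp
    qed
  qed
  also have "\<dots> = F ` fin_space n" unfolding F.span_image span_unit_seq ..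
  finally show ?thesis using into by blast
qed

section \<open>Finite sections\<close>

lemma tail_l2sq_shift_le:
  assumes y: "y \<in> l2w (\<mu>+1)" and nN: "N \<le> n"
    and t: "\<And>k. k \<ge> n \<Longrightarrow> t k = y (k - N)"
  shows "tail_l2sq \<mu> n t \<le> (real N + 1) powr \<bar>2*\<mu>\<bar> / (real (n - N) + 1)^2 * l2sq (\<mu>+1) y"
proof -
  define g where "g i = (cmod (y i))^2 * (real i + 1) powr (2 * (\<mu>+1))" for i
  define c where "c = (real N + 1) powr \<bar>2*\<mu>\<bar> / (real (n - N) + 1)^2"
  have c0: "c \<ge> 0" unfolding c_def by simp
  have g0: "g i \<ge> 0" for i unfolding g_def by simp
  have sg: "summable g" using summable_l2w[OF y] unfolding g_def .
  define h where "h k = (if k < N then 0 else c * g (k - N))" for k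
  have hs: "(\<lambda>k. h (k + N)) = (\<lambda>k. c * g k)" unfolding h_def by auto
  have sh: "summable h"
    using summable_iff_shift[of h N] hs sg by (simp add: summable_mult)
  have sumh: "suminf h = c * suminf g"
    using suminf_split_initial_segment[OF sh, of N] hs suminf_mult[OF sg, of c] by (simp add: h_def)
  let ?f = "\<lambda>k. if k < n then 0 else (cmod (t k))^2 * (real k + 1) powr (2 * \<mu>)"
  have le: "?f k \<le> h k" for k
  proof (cases "k < n")
    case True
    then show ?thesis unfolding h_def using c0 g0 by simp
  next
    case False
    define i where "i = k - N"
    have ki: "k = i + N" using False nN unfolding i_def by simp
    have "(real k + 1) powr (2 * \<mu>) \<le> (real N + 1) powr \<bar>2*\<mu>\<bar> * (real i + 1) powr (2 * \<mu>)"
      unfolding ki by (rule weight_shift_ge)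
    also have "(real i + 1) powr (2 * \<mu>) \<le> (real i + 1) powr (2 * (\<mu>+1)) / (real (n - N) + 1)^2"
    proof -
      have "(real i + 1) powr (2 * \<mu>) * (real (n - N) + 1)^2 \<le> (real i + 1) powr (2 * \<mu>) * (real i + 1)^2"
        using False nN unfolding i_def by (intro mult_left_mono power_mono) auto
      then show ?thesis unfolding weight_add_one by (simp add: divide_simps)
    qed
    finally have "(cmod (y i))^2 * (real k + 1) powr (2 * \<mu>) \<le> (cmod (y i))^2 * (c * (real i + 1) powr (2 * (\<mu>+1)))"
      by (intro mult_left_mono) (auto simp: c_def mult_left_mono)
    then show ?thesis using False t[of k] nN unfolding h_def g_def i_def by (simp add: mult_ac)
  qed
  have sf: "summable ?f" by (rule summable_comparison_test[OF _ sh]) (use le in auto)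
  have "suminf ?f \<le> suminf h" by (rule suminf_le[OF le sf sh])
  then show ?thesis unfolding sumh c_def g_def l2sq_def tail_l2sq_def .
qed

lemma l2sq_trunc_two_sided_bound:
  assumes T: "T \<in> l2w \<mu>" and x: "0 \<le> l2sq \<mu> x" and A: "0 \<le> A"
    and lower: "l2sq \<mu> x \<le> A * l2sq \<mu> T" and upper: "l2sq \<mu> T \<le> U * l2sq \<mu> x"
    and tail: "tail_l2sq \<mu> n T \<le> q * l2sq \<mu> x" and small: "2 * A * q \<le> 1"
  shows "l2sq \<mu> x \<le> 2 * A * l2sq \<mu> (trunc n T) \<and> l2sq \<mu> (trunc n T) \<le> U * l2sq \<mu> x"
proof -
  have split: "l2sq \<mu> T = l2sq \<mu> (trunc n T) + tail_l2sq \<mu> n T"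
    by (rule l2sq_eq_trunc_plus_tail[OF T])
  have "2 * (A * tail_l2sq \<mu> n T) \<le> 2 * A * (q * l2sq \<mu> x)"
    using tail A by (simp add: mult.assoc mult_left_mono)
  also have "\<dots> \<le> l2sq \<mu> x" using mult_right_mono[OF small x] by (simp add: mult.assoc)
  finally have "2 * (A * tail_l2sq \<mu> n T) \<le> l2sq \<mu> x" .
  moreover have "l2sq \<mu> x \<le> A * l2sq \<mu> (trunc n T) + A * tail_l2sq \<mu> n T"
    using lower unfolding split by (simp add: ring_distribs)
  ultimately have "l2sq \<mu> x \<le> 2 * (A * l2sq \<mu> (trunc n T))" by linarith
  moreover have "l2sq \<mu> (trunc n T) \<le> U * l2sq \<mu> x"
    using upper split tail_l2sq_nonneg[OF T, of n] by linarith
  ultimately show ?thesis by (simp add: mult.assoc)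
qed

lemma fin_opnorm_le_sqrt:
  assumes n: "n \<ge> 1" and K: "0 \<le> K"
    and into: "\<And>x. x \<in> fin_space n \<Longrightarrow> T x \<in> fin_space n"
    and bound: "\<And>x. x \<in> fin_space n \<Longrightarrow> l2sq \<mu> (T x) \<le> K * l2sq \<mu> x"
  shows "fin_opnorm \<mu> n T \<le> sqrt K"
  unfolding fin_opnorm_def
proof (rule cSUP_least)
  have "unit_seq 0 \<in> {x \<in> fin_space n. x \<noteq> (\<lambda>_. 0)}"
    using n by (auto simp: unit_seq_def fin_space_def fun_eq_iff)
  then show "{x \<in> fin_space n. x \<noteq> (\<lambda>_. 0)} \<noteq> {}" by blast
next
  fix x assume "x \<in> {x \<in> fin_space n. x \<noteq> (\<lambda>_. 0)}"
  then have x: "x \<in> fin_space n" and nz: "x \<noteq> (\<lambda>_. 0)" by auto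
  have pos: "0 < sqrt (l2sq \<mu> x)"
    using l2sq_pos[OF subsetD[OF fin_space_subset_l2w x] nz] by simp
  have "sqrt (l2sq \<mu> (T x)) \<le> sqrt (K * l2sq \<mu> x)"
    using bound[OF x] by simp
  also have "\<dots> = sqrt K * sqrt (l2sq \<mu> x)" by (simp add: real_sqrt_mult)
  finally show "l2norm \<mu> (T x) / l2norm \<mu> x \<le> sqrt K"
    using pos by (simp add: l2norm_eq_sqrt_l2sq divide_le_eq)
qed

lemma bij_betw_fin_space_of_lower_bound:
  fixes F :: "cseq \<Rightarrow> cseq"
  assumes add: "\<And>x y. F (\<lambda>k. x k + y k) = (\<lambda>k. F x k + F y k)"
    and smult: "\<And>c x. F (\<lambda>k. c * x k) = (\<lambda>k. c * F x k)"
    and into: "\<And>x. x \<in> fin_space n \<Longrightarrow> F x \<in> fin_space n"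
    and lower: "\<And>x. x \<in> fin_space n \<Longrightarrow> l2sq \<mu> x \<le> A * l2sq \<mu> (F x)"
  shows "bij_betw F (fin_space n) (fin_space n)"
proof -
  have "inj_on F (fin_space n)"
  proof (rule inj_onI)
    fix x y assume x: "x \<in> fin_space n" and y: "y \<in> fin_space n" and eq: "F x = F y"
    define z where "z = (\<lambda>k. x k + (-1) * y k)"
    have z: "z \<in> fin_space n" using x y unfolding fin_space_def z_def by auto
    have "F z = (\<lambda>_. 0)" using eq unfolding z_def add smult by simp
    then have "l2sq \<mu> z \<le> 0" using lower[OF z] by (simp add: l2sq_zero)
    then have "z = (\<lambda>_. 0)" using l2sq_pos[OF subsetD[OF fin_space_subset_l2w[where \<mu>=\<mu>] z]] by fastforce
    then show "x = y" unfolding z_def by (auto simp: fun_eq_iff)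
  qed
  with linear_inj_on_fin_space_imp_surj[of F, OF add smult into] show ?thesis
    unfolding bij_betw_def by blast
qed

lemma eventually_fin_sections_well_conditioned:
  fixes F :: "nat \<Rightarrow> cseq \<Rightarrow> cseq"
  assumes add: "\<And>n x y. F n (\<lambda>k. x k + y k) = (\<lambda>k. F n x k + F n y k)"
    and smult: "\<And>n c x. F n (\<lambda>k. c * x k) = (\<lambda>k. c * F n x k)"
    and into: "\<And>n x. F n x \<in> fin_space n"
    and A: "0 \<le> A" and U: "0 \<le> U"
    and bounds: "\<And>n x. n \<ge> n0 \<Longrightarrow> x \<in> fin_space n \<Longrightarrow>
                   l2sq \<mu> x \<le> A * l2sq \<mu> (F n x) \<and> l2sq \<mu> (F n x) \<le> U * l2sq \<mu> x"
  shows "\<exists>C. \<forall>\<^sub>F n in sequentially. bij_betw (F n) (fin_space n) (fin_space n)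
           \<and> fin_opnorm \<mu> n (F n) \<le> C \<and> fin_opnorm \<mu> n (the_inv_into (fin_space n) (F n)) \<le> C"
proof (intro exI[of _ "sqrt U + sqrt A"] eventually_sequentiallyI[of "max n0 1"] conjI)
  fix n assume n: "max n0 1 \<le> n"
  then have lower: "\<And>x. x \<in> fin_space n \<Longrightarrow> l2sq \<mu> x \<le> A * l2sq \<mu> (F n x)"
    and upper: "\<And>x. x \<in> fin_space n \<Longrightarrow> l2sq \<mu> (F n x) \<le> U * l2sq \<mu> x"
    using bounds by auto
  show bij: "bij_betw (F n) (fin_space n) (fin_space n)"
    by (rule bij_betw_fin_space_of_lower_bound[OF add smult into lower])
  have "fin_opnorm \<mu> n (F n) \<le> sqrt U"
    using n by (intro fin_opnorm_le_sqrt[OF _ U into upper]) auto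
  then show "fin_opnorm \<mu> n (F n) \<le> sqrt U + sqrt A" using real_sqrt_ge_zero[OF A] by linarith
  let ?G = "the_inv_into (fin_space n) (F n)"
  have G: "\<And>y. y \<in> fin_space n \<Longrightarrow> ?G y \<in> fin_space n"
    using bij_betwE[OF bij_betw_the_inv_into[OF bij]] by blast
  have "l2sq \<mu> (?G y) \<le> A * l2sq \<mu> y" if "y \<in> fin_space n" for y
    using lower[OF G[OF that]] f_the_inv_into_f_bij_betw[OF bij that] by simp
  then have "fin_opnorm \<mu> n ?G \<le> sqrt A"
    using n by (intro fin_opnorm_le_sqrt[OF _ A G]) auto
  then show "fin_opnorm \<mu> n ?G \<le> sqrt U + sqrt A" using real_sqrt_ge_zero[OF U] by linarith
qed

lemma BLop_Rop_two_sided_bound: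
  assumes N: "N \<ge> 1"
    and BL: "bounded_map (\<mu>+1) \<mu> (BLop N B a)"
    and BL_inj: "inj_on (BLop N B a) (l2w (\<mu>+1))"
    and BL_inv: "bounded_map \<mu> (\<mu>+1) (the_inv_into (l2w (\<mu>+1)) (BLop N B a))"
  obtains K U where "0 \<le> K" "0 \<le> U"
    "\<And>x. x \<in> l2w \<mu> \<Longrightarrow> BLop N B a (Rop N x) \<in> l2w \<mu>
       \<and> l2sq \<mu> x \<le> K * l2sq \<mu> (BLop N B a (Rop N x))
       \<and> l2sq \<mu> (BLop N B a (Rop N x)) \<le> U * l2sq \<mu> x"
proof -
  obtain Cb where Cb: "Cb \<ge> 0"
    "\<forall>u\<in>l2w (\<mu>+1). BLop N B a u \<in> l2w \<mu> \<and> l2sq \<mu> (BLop N B a u) \<le> Cb * l2sq (\<mu>+1) u"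
    using BL unfolding bounded_map_def by blast
  obtain Ci where Ci: "Ci \<ge> 0"
    "\<forall>f\<in>l2w \<mu>. l2sq (\<mu>+1) (the_inv_into (l2w (\<mu>+1)) (BLop N B a) f) \<le> Ci * l2sq \<mu> f"
    using BL_inv unfolding bounded_map_def by blast
  obtain CR where CR: "CR \<ge> 0"
    "\<forall>x\<in>l2w \<mu>. Rop N x \<in> l2w (\<mu>+1) \<and> l2sq (\<mu>+1) (Rop N x) \<le> CR * l2sq \<mu> x"
    using bounded_map_Rop[OF N] unfolding bounded_map_def by blast
  define K where "K = (2^(N - 1) * fact (N - 1))^2 * Ci"
  show ?thesis
  proof (rule that[of K "Cb * CR"])
    fix x assume x: "x \<in> l2w \<mu>"
    have u: "Rop N x \<in> l2w (\<mu>+1)" and uR: "l2sq (\<mu>+1) (Rop N x) \<le> CR * l2sq \<mu> x"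
      using CR x by auto
    have T: "BLop N B a (Rop N x) \<in> l2w \<mu>"
      and Tu: "l2sq \<mu> (BLop N B a (Rop N x)) \<le> Cb * l2sq (\<mu>+1) (Rop N x)"
      using Cb u by auto
    have uT: "l2sq (\<mu>+1) (Rop N x) \<le> Ci * l2sq \<mu> (BLop N B a (Rop N x))"
      using Ci T the_inv_into_f_f[OF BL_inj u] by fastforce
    have "l2sq \<mu> x \<le> K * l2sq \<mu> (BLop N B a (Rop N x))"
      using order_trans[OF l2sq_le_Rop[OF N u] mult_left_mono[OF uT zero_le_power2]]
      unfolding K_def by (simp add: mult.assoc)
    moreover have "l2sq \<mu> (BLop N B a (Rop N x)) \<le> Cb * CR * l2sq \<mu> x"
      using Tu mult_left_mono[OF uR Cb(1)] by (simp add: mult.assoc)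
    ultimately show "BLop N B a (Rop N x) \<in> l2w \<mu>
       \<and> l2sq \<mu> x \<le> K * l2sq \<mu> (BLop N B a (Rop N x))
       \<and> l2sq \<mu> (BLop N B a (Rop N x)) \<le> Cb * CR * l2sq \<mu> x" using T by blast
  qed (use Ci Cb CR in \<open>auto simp: K_def\<close>)
qed

lemma tail_BLop_Rop_le:
  assumes N: "N \<ge> 1" and low: "bounded_map \<mu> (\<mu>+1) (\<lambda>x. Llow N a (Rop N x))"
  obtains C where "0 \<le> C"
    "\<And>n x. N \<le> n \<Longrightarrow> x \<in> fin_space n \<Longrightarrow>
       tail_l2sq \<mu> n (BLop N B a (Rop N x)) \<le> C / (real (n - N) + 1)^2 * l2sq \<mu> x"
proof -
  obtain CL where CL: "CL \<ge> 0"
    "\<forall>x\<in>l2w \<mu>. Llow N a (Rop N x) \<in> l2w (\<mu>+1) \<and> l2sq (\<mu>+1) (Llow N a (Rop N x)) \<le> CL * l2sq \<mu> x"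
    using low unfolding bounded_map_def by blast
  define Kw where "Kw = (real N + 1) powr \<bar>2*\<mu>\<bar>"
  show ?thesis
  proof (rule that[of "Kw * CL"])
    fix n x assume n: "N \<le> n" and x: "x \<in> fin_space n"
    have xl: "x \<in> l2w \<mu>" using x fin_space_subset_l2w by blast
    have "BLop N B a (Rop N x) k = Llow N a (Rop N x) (k - N)" if "k \<ge> n" for k
      using BLop_Rop_tail[OF N, of k B a x] x that n unfolding fin_space_def by simp
    then have "tail_l2sq \<mu> n (BLop N B a (Rop N x))
        \<le> Kw / (real (n - N) + 1)^2 * l2sq (\<mu>+1) (Llow N a (Rop N x))"
      unfolding Kw_def using CL xl n by (intro tail_l2sq_shift_le) auto
    also have "\<dots> \<le> Kw / (real (n - N) + 1)^2 * (CL * l2sq \<mu> x)"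
      using CL xl unfolding Kw_def by (intro mult_left_mono) auto
    finally show "tail_l2sq \<mu> n (BLop N B a (Rop N x)) \<le> Kw * CL / (real (n - N) + 1)^2 * l2sq \<mu> x"
      by (simp add: mult_ac)
  qed (use CL in \<open>simp add: Kw_def\<close>)
qed

lemma An_Rn_two_sided_bound:
  assumes N: "N \<ge> 1"
    and BL: "bounded_map (\<mu>+1) \<mu> (BLop N B a)"
    and BL_inj: "inj_on (BLop N B a) (l2w (\<mu>+1))"
    and BL_inv: "bounded_map \<mu> (\<mu>+1) (the_inv_into (l2w (\<mu>+1)) (BLop N B a))"
    and low: "bounded_map \<mu> (\<mu>+1) (\<lambda>x. Llow N a (Rop N x))"
  obtains A U n0 where "0 \<le> A" "0 \<le> U"
    "\<And>n x. n \<ge> n0 \<Longrightarrow> x \<in> fin_space n \<Longrightarrow>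
       l2sq \<mu> x \<le> A * l2sq \<mu> ((An N B a n \<circ> Rn N n) x)
     \<and> l2sq \<mu> ((An N B a n \<circ> Rn N n) x) \<le> U * l2sq \<mu> x"
proof -
  obtain K U where K: "0 \<le> K" and U: "0 \<le> U" and full: "\<And>x. x \<in> l2w \<mu> \<Longrightarrow>
      BLop N B a (Rop N x) \<in> l2w \<mu> \<and> l2sq \<mu> x \<le> K * l2sq \<mu> (BLop N B a (Rop N x))
      \<and> l2sq \<mu> (BLop N B a (Rop N x)) \<le> U * l2sq \<mu> x"
    using BLop_Rop_two_sided_bound[OF N BL BL_inj BL_inv] by blast
  obtain C where C: "0 \<le> C" and tail: "\<And>n x. N \<le> n \<Longrightarrow> x \<in> fin_space n \<Longrightarrow>
      tail_l2sq \<mu> n (BLop N B a (Rop N x)) \<le> C / (real (n - N) + 1)^2 * l2sq \<mu> x"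
    using tail_BLop_Rop_le[OF N low] by blast
  define n0 where "n0 = N + nat \<lceil>2 * K * C\<rceil>"
  show ?thesis
  proof (rule that[OF _ U, of "2 * K" n0])
    fix n x assume n: "n0 \<le> n" and x: "x \<in> fin_space n"
    have nN: "N \<le> n" using n unfolding n0_def by simp
    have "2 * K * C \<le> real (n - N)" using n unfolding n0_def by linarith
    also have "\<dots> \<le> (real (n - N) + 1)^2"
      using zero_le_square[of "real (n - N)"] by (simp add: power2_eq_square algebra_simps)
    finally have small: "2 * K * (C / (real (n - N) + 1)^2) \<le> 1"
      by (simp add: divide_simps mult_ac)
    have xl: "x \<in> l2w \<mu>" using x fin_space_subset_l2w by blast
    show "l2sq \<mu> x \<le> 2 * K * l2sq \<mu> ((An N B a n \<circ> Rn N n) x)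
        \<and> l2sq \<mu> ((An N B a n \<circ> Rn N n) x) \<le> U * l2sq \<mu> x"
      unfolding An_Rn_eq_trunc_BLop_Rop[OF x]
      using full[OF xl] l2sq_trunc_two_sided_bound[OF _ l2sq_nonneg[OF xl] K _ _ tail[OF nN x] small]
      by blast
  qed (use K in simp)
qed

theorem lemma4p4:
  fixes N :: nat and a :: "nat \<Rightarrow> real \<Rightarrow> complex"
    and B :: "nat \<Rightarrow> cseq \<Rightarrow> complex" and D lam :: int
  assumes N1: "N \<ge> 1"
    and a_cont: "\<forall>l<N. continuous_on {-1..1} (a l)"
    and M_bdd: "\<forall>l<N. \<forall>\<mu>. \<exists>C. \<forall>v \<in> l2w \<mu>.
                   (\<forall>j. summable (\<lambda>k. Mmat l (a l) j k * v k))
                   \<and> Mop l (a l) v \<in> l2w \<mu>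
                   \<and> l2norm \<mu> (Mop l (a l) v) \<le> C * l2norm \<mu> v"
    and B_add: "\<forall>i<N. \<forall>u \<in> l2w (real_of_int D). \<forall>v \<in> l2w (real_of_int D).
                   B i (\<lambda>k. u k + v k) = B i u + B i v"
    and B_smult: "\<forall>i<N. \<forall>c. \<forall>u \<in> l2w (real_of_int D). B i (\<lambda>k. c * u k) = c * B i u"
    and B_bdd: "\<exists>C. \<forall>i<N. \<forall>u \<in> l2w (real_of_int D).
                   cmod (B i u) \<le> C * l2norm (real_of_int D) u"
    and lam_ge: "lam \<ge> D - 1"
    and inv: "bij_betw (BLop N B a) (l2w (real_of_int lam + 1)) (l2w (real_of_int lam))"
    and bdd: "\<exists>C. \<forall>u \<in> l2w (real_of_int lam + 1).
                l2norm (real_of_int lam) (BLop N B a u) \<le> C * l2norm (real_of_int lam + 1) u"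
    and inv_bdd: "\<exists>C. \<forall>f \<in> l2w (real_of_int lam).
                l2norm (real_of_int lam + 1) (the_inv_into (l2w (real_of_int lam + 1)) (BLop N B a) f)
                  \<le> C * l2norm (real_of_int lam) f"
  shows "\<exists>C. \<forall>\<^sub>F n in sequentially.
           bij_betw (An N B a n \<circ> Rn N n) (fin_space n) (fin_space n)
           \<and> fin_opnorm (real_of_int lam) n (An N B a n \<circ> Rn N n) \<le> C
           \<and> fin_opnorm (real_of_int lam) n (the_inv_into (fin_space n) (An N B a n \<circ> Rn N n)) \<le> C"
proof -
  have M: "bounded_map \<mu> \<mu> (Mop l (a l))" if "l < N" for l \<mu>
    using M_bdd that by (intro bounded_map_of_l2norm_bound) blast
  have BL: "bounded_map (real_of_int lam + 1) (real_of_int lam) (BLop N B a)"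
    using bdd bij_betwE[OF inv] by (intro bounded_map_of_l2norm_bound) blast
  have BL_inv: "bounded_map (real_of_int lam) (real_of_int lam + 1)
                  (the_inv_into (l2w (real_of_int lam + 1)) (BLop N B a))"
    using inv_bdd bij_betwE[OF bij_betw_the_inv_into[OF inv]]
    by (intro bounded_map_of_l2norm_bound) blast
  obtain A U n0 where "0 \<le> A" "0 \<le> U"
    "\<And>n x. n \<ge> n0 \<Longrightarrow> x \<in> fin_space n \<Longrightarrow>
       l2sq (real_of_int lam) x \<le> A * l2sq (real_of_int lam) ((An N B a n \<circ> Rn N n) x)
     \<and> l2sq (real_of_int lam) ((An N B a n \<circ> Rn N n) x) \<le> U * l2sq (real_of_int lam) x"
    using An_Rn_two_sided_bound[OF N1 BL bij_betw_imp_inj_on[OF inv] BL_inv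
        bounded_map_Llow_Rop[OF N1 M]] by blast
  then show ?thesis
    by (intro eventually_fin_sections_well_conditioned[OF An_Rn_add[OF B_add] An_Rn_smult[OF B_smult]
          An_Rn_in_fin_space])
qed

end
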